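(* Suppose $n$ is even and $T\in SO(n)$. Suppose the minimal polynomial of $T$ is a power of an irreducible quadratic polynomial over $\mathbb R$. Then $T$ is real in $SO(n)$ if and only if $n\not\equiv 2\pmod 4$.
   Context: An element $g$ of a group $G$ is real in $G$ if there is $h\in G$ with $hgh^{-1}=g^{-1}$. *)

theory Defs
  imports "Jordan_Normal_Form.Determinant" "HOL-Algebra.Group"
    "HOL-Computational_Algebra.Polynomial"
begin

definition SO_mats :: "nat \<Rightarrow> real mat set" where
  "SO_mats n = {A \<in> carrier_mat n n. A * transpose_mat A = 1\<^sub>m n \<and> det A = 1}"

definition SO_group :: "nat \<Rightarrow> real mat monoid" where
  "SO_group n = \<lparr>carrier = SO_mats n, mult = (*), one = 1\<^sub>m n\<rparr>"

definition real_in :: "('a, 'b) monoid_scheme \<Rightarrow> 'a \<Rightarrow> bool" where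
  "real_in G g \<longleftrightarrow> (\<exists>h \<in> carrier G. h \<otimes>\<^bsub>G\<^esub> g \<otimes>\<^bsub>G\<^esub> inv\<^bsub>G\<^esub> h = inv\<^bsub>G\<^esub> g)"

definition poly_mat :: "nat \<Rightarrow> 'a::comm_ring_1 poly \<Rightarrow> 'a mat \<Rightarrow> 'a mat" where
  "poly_mat n p A = foldr (\<lambda>c M. c \<cdot>\<^sub>m 1\<^sub>m n + A * M) (coeffs p) (0\<^sub>m n n)"

definition is_min_poly :: "nat \<Rightarrow> 'a::field mat \<Rightarrow> 'a poly \<Rightarrow> bool" where
  "is_min_poly n A p \<longleftrightarrow> lead_coeff p = 1 \<and> poly_mat n p A = 0\<^sub>m n n \<and>
     (\<forall>q. q \<noteq> 0 \<and> poly_mat n q A = 0\<^sub>m n n \<longrightarrow> degree p \<le> degree q)"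

end

theory Submission
  imports Defs
begin

text \<open>Since \<open>T\<close> is normal, \<open>q(T)\<close> is a normal nilpotent matrix and hence zero. Orthogonality
  forces \<open>q\<close> to be palindromic, so up to a scalar \<open>q = x\<^sup>2 - 2cx + 1\<close> with \<open>c\<^sup>2 < 1\<close>, and
  \<open>T = c + sJ\<close> for an orthogonal complex structure \<open>J\<close> (\<open>J\<^sup>T = -J\<close>, \<open>J\<^sup>2 = -1\<close>) and \<open>s \<noteq> 0\<close>.
  An orthogonal \<open>h\<close> conjugates \<open>T\<close> to \<open>T\<^sup>T = T\<^sup>-\<^sup>1\<close> iff it anticommutes with \<open>J\<close>. In an
  orthonormal basis adapted to \<open>J\<close>, the matrix \<open>diag(1, -1, 1, -1, \<dots>)\<close> anticommutes with \<open>J\<close>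
  and has determinant \<open>(-1)\<^bsup>n/2\<^esup>\<close>. Any other anticommuting \<open>h\<close> differs from it by a matrix
  commuting with \<open>J\<close>, i.e. a complex-linear map, whose real determinant \<open>|det\<^sub>\<complex>|\<^sup>2\<close> is
  nonnegative. So an anticommuting \<open>h\<close> of determinant \<open>1\<close> exists iff \<open>n/2\<close> is even.\<close>

lemma mult_inverse_cancel_left_mat:
  fixes A B C :: "'a::semiring_1 mat"
  assumes "A \<in> carrier_mat n n" "B \<in> carrier_mat n n" "C \<in> carrier_mat n m" "A * B = 1\<^sub>m n"
  shows "A * (B * C) = C"
  using assms by (simp flip: assoc_mult_mat[of A n n B n C m])

lemma carrier_SO_group [simp]: "carrier (SO_group n) = SO_mats n"
  and mult_SO_group [simp]: "x \<otimes>\<^bsub>SO_group n\<^esub> y = x * y"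
  by (simp_all add: SO_group_def)

lemma transpose_mult_self_SO:
  assumes "A \<in> SO_mats n"
  shows "transpose_mat A * A = 1\<^sub>m n"
  using assms mat_mult_left_right_inverse[of A n "transpose_mat A"] by (auto simp: SO_mats_def)

lemma transpose_mem_SO_mats:
  assumes "A \<in> SO_mats n"
  shows "transpose_mat A \<in> SO_mats n"
  using assms transpose_mult_self_SO[OF assms] det_transpose[of A n] by (auto simp: SO_mats_def)

lemma group_SO_group: "group (SO_group n)"
proof (rule groupI)
  fix x y assume "x \<in> carrier (SO_group n)" "y \<in> carrier (SO_group n)"
  then have x: "x \<in> carrier_mat n n" "x * transpose_mat x = 1\<^sub>m n" "det x = 1"
    and y: "y \<in> carrier_mat n n" "y * transpose_mat y = 1\<^sub>m n" "det y = 1"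
    by (auto simp: SO_group_def SO_mats_def)
  have "(x * y) * transpose_mat (x * y) = x * (y * (transpose_mat y * transpose_mat x))"
    using x y by (simp add: transpose_mult[of _ n n _ n] assoc_mult_mat[of _ n n _ n _ n])
  also have "\<dots> = 1\<^sub>m n"
    using x y by (simp add: mult_inverse_cancel_left_mat[of y n])
  finally have "(x * y) * transpose_mat (x * y) = 1\<^sub>m n" .
  then show "x \<otimes>\<^bsub>SO_group n\<^esub> y \<in> carrier (SO_group n)"
    using x y by (auto simp: SO_group_def SO_mats_def det_mult)
next
  fix x assume "x \<in> carrier (SO_group n)"
  then show "\<exists>y\<in>carrier (SO_group n). y \<otimes>\<^bsub>SO_group n\<^esub> x = \<one>\<^bsub>SO_group n\<^esub>"
    using transpose_mem_SO_mats transpose_mult_self_SO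
    by (intro bexI[of _ "transpose_mat x"]) (auto simp: SO_group_def)
qed (auto simp: SO_group_def SO_mats_def assoc_mult_mat[of _ n n _ n _ n])

lemma inv_SO_group:
  assumes "A \<in> SO_mats n"
  shows "inv\<^bsub>SO_group n\<^esub> A = transpose_mat A"
  using group.inv_equality[OF group_SO_group] transpose_mult_self_SO[OF assms]
    transpose_mem_SO_mats[OF assms] assms
  by (simp add: SO_group_def)

lemma real_in_SO_group_iff:
  assumes "T \<in> SO_mats n"
  shows "real_in (SO_group n) T \<longleftrightarrow> (\<exists>h \<in> SO_mats n. h * T * transpose_mat h = transpose_mat T)"
  using assms by (auto simp: real_in_def inv_SO_group)

lemma smult_zero_left_mat [simp]: "(0::'a::semiring_0) \<cdot>\<^sub>m A = 0\<^sub>m (dim_row A) (dim_col A)"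
  by (rule eq_matI) auto

lemma smult_one_left_mat [simp]: "(1::'a::monoid_mult) \<cdot>\<^sub>m A = A"
  by (rule eq_matI) auto

lemma transpose_smult_mat: "transpose_mat (c \<cdot>\<^sub>m A) = c \<cdot>\<^sub>m transpose_mat A"
  by (rule eq_matI) auto

lemma pow_mat_add:
  fixes A :: "'a::semiring_1 mat"
  assumes "A \<in> carrier_mat n n"
  shows "A ^\<^sub>m a * A ^\<^sub>m b = A ^\<^sub>m (a + b)"
proof -
  interpret semiring "ring_mat TYPE('a) n ()" by (rule semiring_mat)
  show ?thesis
    using nat_pow_mult[of A a b] assms by (simp add: pow_mat_ring_pow[OF assms, where b="()"] ring_mat_simps)
qed

lemma pow_mat_commute:
  fixes A B :: "'a::semiring_1 mat"
  assumes A: "A \<in> carrier_mat n n" and B: "B \<in> carrier_mat n n" and AB: "A * B = B * A"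
  shows "A ^\<^sub>m k * B = B * A ^\<^sub>m k"
proof -
  interpret semiring "ring_mat TYPE('a) n ()" by (rule semiring_mat)
  show ?thesis
    using group_commutes_pow[of A B k] A B AB by (simp add: pow_mat_ring_pow[OF A, where b="()"] ring_mat_simps)
qed

lemma pow_mat_mult_distrib:
  fixes A B :: "'a::semiring_1 mat"
  assumes A: "A \<in> carrier_mat n n" and B: "B \<in> carrier_mat n n" and AB: "A * B = B * A"
  shows "(A * B) ^\<^sub>m k = A ^\<^sub>m k * B ^\<^sub>m k"
proof -
  interpret semiring "ring_mat TYPE('a) n ()" by (rule semiring_mat)
  have "(A * B) [^]\<^bsub>ring_mat TYPE('a) n ()\<^esub> k = A ^\<^sub>m k * B ^\<^sub>m k"
    using pow_mult_distrib[of A B k] A B AB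
    by (simp add: pow_mat_ring_pow[where b="()"] ring_mat_simps)
  then show ?thesis
    by (simp add: pow_mat_ring_pow[OF mult_carrier_mat[OF A B], where b="()"])
qed

lemma transpose_pow_mat:
  fixes A :: "'a::comm_semiring_1 mat"
  assumes A: "A \<in> carrier_mat n n"
  shows "transpose_mat (A ^\<^sub>m k) = transpose_mat A ^\<^sub>m k"
proof (induct k)
  case (Suc k)
  have "transpose_mat (A ^\<^sub>m Suc k) = transpose_mat A * transpose_mat A ^\<^sub>m k"
    using A Suc by (simp add: transpose_mult[of _ n n _ n])
  also have "\<dots> = transpose_mat A ^\<^sub>m Suc k"
    using pow_mat_commute[of "transpose_mat A" n "transpose_mat A" k] A by simp
  finally show ?case .
qed (use A in simp)

lemma poly_mat_pCons:
  fixes A :: "'a::comm_ring_1 mat"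
  assumes "A \<in> carrier_mat n n"
  shows "poly_mat n (pCons a p) A = a \<cdot>\<^sub>m 1\<^sub>m n + A * poly_mat n p A"
proof (cases "p = 0 \<and> a = 0")
  case False
  then have "coeffs (pCons a p) = a # coeffs p"
    by (auto simp: cCons_def)
  then show ?thesis by (simp add: poly_mat_def)
qed (use assms in \<open>simp add: poly_mat_def\<close>)

lemma poly_mat_carrier [simp]:
  fixes A :: "'a::comm_ring_1 mat"
  assumes "A \<in> carrier_mat n n"
  shows "poly_mat n p A \<in> carrier_mat n n"
  by (induct p) (use assms in \<open>auto simp: poly_mat_pCons poly_mat_def\<close>)

lemma dim_poly_mat [simp]:
  fixes A :: "'a::comm_ring_1 mat"
  assumes "A \<in> carrier_mat n n"
  shows "dim_row (poly_mat n p A) = n" "dim_col (poly_mat n p A) = n"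
  using poly_mat_carrier[OF assms, of p] by auto

lemma poly_mat_0 [simp]: "poly_mat n 0 A = 0\<^sub>m n n"
  by (simp add: poly_mat_def)

lemma poly_mat_1 [simp]:
  fixes A :: "'a::comm_ring_1 mat"
  assumes "A \<in> carrier_mat n n"
  shows "poly_mat n 1 A = 1\<^sub>m n"
  using assms by (simp add: poly_mat_def)

lemma poly_mat_linear:
  fixes A :: "'a::comm_ring_1 mat"
  assumes A: "A \<in> carrier_mat n n"
  shows "poly_mat n [:a, b:] A = a \<cdot>\<^sub>m 1\<^sub>m n + b \<cdot>\<^sub>m A"
  using A by (simp add: poly_mat_pCons mult_smult_distrib[OF A one_carrier_mat])

lemma poly_mat_X:
  fixes A :: "'a::comm_ring_1 mat"
  assumes A: "A \<in> carrier_mat n n"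
  shows "poly_mat n [:0, 1:] A = A"
  using A by (simp add: poly_mat_linear)

lemma poly_mat_const:
  fixes A :: "'a::comm_ring_1 mat"
  assumes "A \<in> carrier_mat n n"
  shows "poly_mat n [:a:] A = a \<cdot>\<^sub>m 1\<^sub>m n"
  using assms by (simp add: poly_mat_pCons)

lemma poly_mat_quadratic:
  fixes A :: "'a::comm_ring_1 mat"
  assumes A: "A \<in> carrier_mat n n"
  shows "poly_mat n [:a, b, c:] A = a \<cdot>\<^sub>m 1\<^sub>m n + b \<cdot>\<^sub>m A + c \<cdot>\<^sub>m (A * A)"
  using A
  by (simp add: poly_mat_pCons mult_add_distrib_mat[of A n n _ n] mult_smult_distrib[of A n n _ n])
    (intro eq_matI; simp add: algebra_simps)

lemma poly_mat_add:
  fixes A :: "'a::comm_ring_1 mat"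
  assumes A: "A \<in> carrier_mat n n"
  shows "poly_mat n (p + q) A = poly_mat n p A + poly_mat n q A"
proof (induct p arbitrary: q)
  case (pCons a p)
  obtain b q' where q: "q = pCons b q'" by (cases q) auto
  have "A * (poly_mat n p A + poly_mat n q' A) = A * poly_mat n p A + A * poly_mat n q' A"
    using A by (simp add: mult_add_distrib_mat[OF A, of _ n])
  then show ?case
    using pCons A by (simp add: q poly_mat_pCons) (intro eq_matI; simp add: algebra_simps)
qed (use A in simp)

lemma poly_mat_smult:
  fixes A :: "'a::comm_ring_1 mat"
  assumes A: "A \<in> carrier_mat n n"
  shows "poly_mat n (smult c p) A = c \<cdot>\<^sub>m poly_mat n p A"
proof (induct p)
  case (pCons a p)
  then show ?case
    using A by (simp add: poly_mat_pCons mult_smult_distrib[OF A, of _ n]) (intro eq_matI; simp add: algebra_simps)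
qed simp

lemma poly_mat_mult:
  fixes A :: "'a::comm_ring_1 mat"
  assumes A: "A \<in> carrier_mat n n"
  shows "poly_mat n (p * q) A = poly_mat n p A * poly_mat n q A"
proof (induct p)
  case (pCons a p)
  have "poly_mat n (pCons a p * q) A = poly_mat n (smult a q) A + poly_mat n (pCons 0 (p * q)) A"
    by (simp add: poly_mat_add[OF A])
  also have "\<dots> = a \<cdot>\<^sub>m poly_mat n q A + A * (poly_mat n p A * poly_mat n q A)"
    using pCons A by (simp add: poly_mat_smult poly_mat_pCons) (intro eq_matI; simp)
  also have "\<dots> = poly_mat n (pCons a p) A * poly_mat n q A"
    using A by (simp add: poly_mat_pCons add_mult_distrib_mat[of _ n n _ _ n] mult_smult_assoc_mat[of _ n n _ n]
        assoc_mult_mat[of _ n n _ n _ n])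
  finally show ?case .
qed (use A in simp)

lemma poly_mat_pow:
  fixes A :: "'a::comm_ring_1 mat"
  assumes A: "A \<in> carrier_mat n n"
  shows "poly_mat n (p ^ k) A = poly_mat n p A ^\<^sub>m k"
proof (induct k)
  case (Suc k)
  then show ?case
    using A pow_mat_commute[of "poly_mat n p A" n "poly_mat n p A" k] by (simp add: poly_mat_mult)
qed (use A in simp)

lemma poly_mat_commute:
  fixes A B :: "'a::comm_ring_1 mat"
  assumes A: "A \<in> carrier_mat n n" and B: "B \<in> carrier_mat n n" and AB: "A * B = B * A"
  shows "poly_mat n p A * B = B * poly_mat n p A"
proof (induct p)
  case (pCons a p)
  let ?P = "poly_mat n p A"
  have P: "?P \<in> carrier_mat n n" using A by simp
  have "A * ?P * B = A * (B * ?P)"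
    using A B P pCons by (simp add: assoc_mult_mat[of _ n n _ n _ n])
  also have "\<dots> = B * (A * ?P)"
    using A B P AB by (simp flip: assoc_mult_mat[of _ n n _ n _ n])
  finally have "A * ?P * B = B * (A * ?P)" .
  then show ?case
    using A B P by (simp add: poly_mat_pCons add_mult_distrib_mat[of _ n n _ _ n] mult_add_distrib_mat[of B n n _ n]
        mult_smult_assoc_mat[of _ n n _ n] mult_smult_distrib[of B n n _ n] del: assoc_mult_mat)
qed (use B in simp)

lemma transpose_poly_mat:
  fixes A :: "'a::comm_ring_1 mat"
  assumes A: "A \<in> carrier_mat n n"
  shows "transpose_mat (poly_mat n p A) = poly_mat n p (transpose_mat A)"
proof (induct p)
  case (pCons a p)
  then show ?case
    using A poly_mat_commute[of "transpose_mat A" n "transpose_mat A" p]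
    by (simp add: poly_mat_pCons transpose_add[of _ n n] transpose_smult_mat transpose_mult[of _ n n _ n])
qed simp

section \<open>Normal nilpotent real matrices vanish\<close>

lemma transpose_mult_self_eq_0_imp_eq_0:
  fixes A :: "real mat"
  assumes A: "A \<in> carrier_mat m n" and z: "transpose_mat A * A = 0\<^sub>m n n"
  shows "A = 0\<^sub>m m n"
proof (rule eq_matI)
  fix i j assume i: "i < dim_row (0\<^sub>m m n :: real mat)" and j: "j < dim_col (0\<^sub>m m n :: real mat)"
  have "(\<Sum>l = 0..<m. A $$ (l,j) * A $$ (l,j)) = (transpose_mat A * A) $$ (j,j)"
    using A j by (simp add: scalar_prod_def)
  also have "\<dots> = 0" using z j by simp
  finally have "\<forall>l\<in>{0..<m}. A $$ (l,j) * A $$ (l,j) = 0"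
    by (subst (asm) sum_nonneg_eq_0_iff) auto
  then show "A $$ (i,j) = 0\<^sub>m m n $$ (i,j)" using i j by simp
qed (use A in auto)

text \<open>If \<open>S ^ k = 0\<close> with \<open>k > 1\<close>, then \<open>l = \<lceil>k/2\<rceil> < k\<close> satisfies
  \<open>(S ^ l)\<^sup>T S ^ l = S ^ (2l) = 0\<close>, so already \<open>S ^ l = 0\<close>.\<close>
lemma symmetric_nilpotent_mat_eq_0:
  fixes S :: "real mat"
  assumes S: "S \<in> carrier_mat n n" and sym: "transpose_mat S = S" and nil: "S ^\<^sub>m k = 0\<^sub>m n n"
  shows "S = 0\<^sub>m n n"
  using nil
proof (induct k rule: less_induct)
  case (less k)
  consider "k = 0" | "k = 1" | "k > 1" by linarith
  then show ?case
  proof cases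
    case 1
    then have one: "(1\<^sub>m n :: real mat) = 0\<^sub>m n n" using less.prems S by simp
    have "n = 0"
    proof (rule ccontr)
      assume "n \<noteq> 0"
      then have "(1\<^sub>m n :: real mat) $$ (0,0) \<noteq> 0\<^sub>m n n $$ (0,0)" by simp
      with one show False by simp
    qed
    then show ?thesis using S by auto
  next
    case 3
    define l where "l = (k + 1) div 2"
    have lk: "l < k" "k \<le> l + l" using 3 by (auto simp: l_def)
    have "transpose_mat (S ^\<^sub>m l) * S ^\<^sub>m l = S ^\<^sub>m (l + l)"
      using S sym by (simp add: transpose_pow_mat pow_mat_add)
    also have "\<dots> = S ^\<^sub>m k * S ^\<^sub>m (l + l - k)"
      using pow_mat_add[OF S, of k "l + l - k"] lk by simp
    also have "\<dots> = 0\<^sub>m n n" using less.prems S by simp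
    finally have "S ^\<^sub>m l = 0\<^sub>m n n"
      by (rule transpose_mult_self_eq_0_imp_eq_0[rotated]) (use S in simp)
    then show ?thesis by (rule less.hyps[OF lk(1)])
  qed (use less.prems S in simp)
qed

lemma normal_nilpotent_mat_eq_0:
  fixes N :: "real mat"
  assumes N: "N \<in> carrier_mat n n"
    and normal: "N * transpose_mat N = transpose_mat N * N" and nil: "N ^\<^sub>m k = 0\<^sub>m n n"
  shows "N = 0\<^sub>m n n"
proof -
  have "(transpose_mat N * N) ^\<^sub>m k = transpose_mat N ^\<^sub>m k * N ^\<^sub>m k"
    using N normal by (simp add: pow_mat_mult_distrib)
  also have "\<dots> = 0\<^sub>m n n" using nil N by simp
  finally have "transpose_mat N * N = 0\<^sub>m n n"
    by (rule symmetric_nilpotent_mat_eq_0[rotated 2]) (use N in \<open>simp_all add: transpose_mult[of _ n n _ n]\<close>)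
  then show ?thesis by (rule transpose_mult_self_eq_0_imp_eq_0[OF N])
qed

lemma normal_mat_poly_mat_power_eq_0:
  fixes T :: "real mat"
  assumes T: "T \<in> carrier_mat n n" and normal: "T * transpose_mat T = transpose_mat T * T"
    and "poly_mat n (p ^ k) T = 0\<^sub>m n n"
  shows "poly_mat n p T = 0\<^sub>m n n"
proof (rule normal_nilpotent_mat_eq_0)
  have Tt: "transpose_mat T \<in> carrier_mat n n" using T by simp
  have "poly_mat n p (transpose_mat T) * T = T * poly_mat n p (transpose_mat T)"
    using poly_mat_commute[OF Tt T normal[symmetric]] .
  then have "poly_mat n p T * poly_mat n p (transpose_mat T) = poly_mat n p (transpose_mat T) * poly_mat n p T"
    using poly_mat_commute[OF T poly_mat_carrier[OF Tt]] by simp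
  then show "poly_mat n p T * transpose_mat (poly_mat n p T) = transpose_mat (poly_mat n p T) * poly_mat n p T"
    using T by (simp add: transpose_poly_mat)
  show "poly_mat n p T ^\<^sub>m k = 0\<^sub>m n n"
    using assms by (simp add: poly_mat_pow)
qed (use T in simp)

section \<open>Orthogonal matrices annihilated by an irreducible quadratic\<close>

text \<open>Multiplying \<open>a + bT + cT\<^sup>2 = 0\<close> by \<open>T\<^sup>T = T\<^sup>-\<^sup>1\<close> gives \<open>aT\<^sup>T + b + cT = 0\<close>. If \<open>a \<noteq> c\<close>,
  comparing this with its transpose makes \<open>T\<close> symmetric, hence \<open>T\<^sup>2 = 1\<close>, and the two relations
  at the entry \<open>(0, 0)\<close> produce a real root of the polynomial.\<close>
lemma orthogonal_quadratic_annihilator_palindromic: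
  fixes T :: "real mat"
  assumes T: "T \<in> carrier_mat n n" and orth: "transpose_mat T * T = 1\<^sub>m n" and n: "n > 0"
    and ann: "poly_mat n [:a, b, c:] T = 0\<^sub>m n n" and no_root: "\<And>x. poly [:a, b, c:] x \<noteq> 0"
  shows "a = c"
proof (rule ccontr)
  assume "a \<noteq> c"
  let ?Tt = "transpose_mat T"
  have Tt: "?Tt \<in> carrier_mat n n" using T by simp
  have X: "a \<cdot>\<^sub>m 1\<^sub>m n + b \<cdot>\<^sub>m T + c \<cdot>\<^sub>m (T * T) = 0\<^sub>m n n"
    using ann by (simp add: poly_mat_quadratic[OF T])
  have "?Tt * (a \<cdot>\<^sub>m 1\<^sub>m n + b \<cdot>\<^sub>m T + c \<cdot>\<^sub>m (T * T)) = a \<cdot>\<^sub>m ?Tt + b \<cdot>\<^sub>m 1\<^sub>m n + c \<cdot>\<^sub>m T"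
    using T orth mult_inverse_cancel_left_mat[OF Tt T T orth]
    by (simp add: mult_add_distrib_mat[of ?Tt n n _ n] mult_smult_distrib[of ?Tt n n _ n])
  with X T have Y: "a \<cdot>\<^sub>m ?Tt + b \<cdot>\<^sub>m 1\<^sub>m n + c \<cdot>\<^sub>m T = 0\<^sub>m n n"
    by simp
  have X_entry: "a * (if i = j then 1 else 0) + b * T $$ (i,j) + c * (T * T) $$ (i,j) = 0"
    if "i < n" "j < n" for i j
    using arg_cong[OF X, of "\<lambda>M. M $$ (i,j)"] that T by simp
  have Y_entry: "a * T $$ (j,i) + b * (if i = j then 1 else 0) + c * T $$ (i,j) = 0"
    if "i < n" "j < n" for i j
    using arg_cong[OF Y, of "\<lambda>M. M $$ (i,j)"] that T by simp
  have "T $$ (j,i) = T $$ (i,j)" if "i < n" "j < n" for i j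
  proof -
    have "(a - c) * (T $$ (j,i) - T $$ (i,j)) = 0"
      using Y_entry[OF that] Y_entry[OF that(2,1)] by (auto simp: algebra_simps split: if_splits)
    then show ?thesis using \<open>a \<noteq> c\<close> by simp
  qed
  then have "?Tt = T" using T by (intro eq_matI) auto
  then have "(T * T) $$ (0,0) = 1" using orth n by simp
  define t where "t = T $$ (0,0)"
  have 1: "a + b * t + c = 0" and 2: "a * t + b + c * t = 0"
    using X_entry[OF n n] Y_entry[OF n n] \<open>(T * T) $$ (0,0) = 1\<close> by (simp_all add: t_def)
  show False
  proof (cases "b = 0")
    case True
    then show False using 1 no_root[of 1] by simp
  next
    case False
    have "a + c = - (b * t)" using 1 by linarith
    moreover have "(a + c) * t + b = 0" using 2 by (simp add: algebra_simps)
    ultimately have "b * (1 - t * t) = 0" by (simp add: algebra_simps)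
    with False have "t * t = 1" by simp
    then show False using 1 no_root[of t] by (simp add: algebra_simps)
  qed
qed

lemma poly_eq_quadratic_coeffs:
  fixes p :: "'a::zero poly"
  assumes "degree p \<le> 2"
  shows "p = [:coeff p 0, coeff p 1, coeff p 2:]"
proof (rule poly_eqI)
  fix i
  show "coeff p i = coeff [:coeff p 0, coeff p 1, coeff p 2:] i"
    using assms by (cases i; cases "i - 1"; cases "i - 2") (auto simp: coeff_eq_0 numeral_2_eq_2)
qed

lemma orthogonal_irreducible_quadratic_annihilator:
  fixes T :: "real mat"
  assumes T: "T \<in> carrier_mat n n" and orth: "transpose_mat T * T = 1\<^sub>m n"
    and irr: "irreducible q" and deg: "degree q = 2" and ann: "poly_mat n q T = 0\<^sub>m n n"
  obtains c where "c\<^sup>2 < 1" and "poly_mat n [:1, - 2 * c, 1:] T = 0\<^sub>m n n"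
proof (cases "n = 0")
  case True
  then have "poly_mat n [:1, - 2 * 0, 1:] T = 0\<^sub>m n n"
    using T by (intro eq_matI) auto
  then show thesis using that[of 0] by simp
next
  case False
  define a b d where "a = coeff q 0" and "b = coeff q 1" and "d = coeff q 2"
  have q: "q = [:a, b, d:]"
    using poly_eq_quadratic_coeffs[of q] deg by (simp add: a_def b_def d_def)
  have "q \<noteq> 0" using irr by auto
  then have "d \<noteq> 0" using deg leading_coeff_neq_0[of q] by (simp add: d_def)
  have no_root: "poly [:a, b, d:] x \<noteq> 0" for x
    using root_imp_reducible_poly[of q x] irr deg q by auto
  have "a = d"
    using orthogonal_quadratic_annihilator_palindromic[OF T orth] False ann no_root q by blast
  define c where "c = - b / (2 * d)"
  have q_eq: "q = smult d [:1, - 2 * c, 1:]"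
    using \<open>a = d\<close> \<open>d \<noteq> 0\<close> by (simp add: q c_def)
  have "poly_mat n [:1, - 2 * c, 1:] T = 0\<^sub>m n n"
    using ann \<open>d \<noteq> 0\<close> poly_mat_smult[OF T, of "1 / d" q] by (simp add: q_eq)
  moreover have "c\<^sup>2 < 1"
  proof (rule ccontr)
    assume "\<not> c\<^sup>2 < 1"
    then have "poly [:1, - 2 * c, 1:] (c + sqrt (c\<^sup>2 - 1)) = 0"
      by (simp add: algebra_simps power2_eq_square)
    then have "poly q (c + sqrt (c\<^sup>2 - 1)) = 0" by (simp only: q_eq poly_smult mult_zero_right)
    then show False using no_root q by simp
  qed
  ultimately show ?thesis using that by blast
qed

definition orthogonal_complex_structure :: "nat \<Rightarrow> real mat \<Rightarrow> bool" where
  "orthogonal_complex_structure n J \<longleftrightarrow>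
     J \<in> carrier_mat n n \<and> transpose_mat J = - J \<and> J * J = - 1\<^sub>m n"

lemma orthogonal_quadratic_transpose:
  fixes T :: "real mat"
  assumes T: "T \<in> carrier_mat n n" and orth: "transpose_mat T * T = 1\<^sub>m n"
    and ann: "poly_mat n [:1, - 2 * c, 1:] T = 0\<^sub>m n n"
  shows "transpose_mat T = poly_mat n [:2 * c, - 1:] T"
proof -
  have inverse: "[:0, 1:] * [:2 * c, - 1:] = [:1:] + smult (- 1) [:1, - 2 * c, 1:]"
    by simp
  have "T * poly_mat n [:2 * c, - 1:] T = poly_mat n ([:0, 1:] * [:2 * c, - 1:]) T"
    using T by (simp only: poly_mat_mult poly_mat_X)
  also have "\<dots> = 1\<^sub>m n"
    unfolding inverse using T ann by (simp only: poly_mat_add poly_mat_smult poly_mat_const) simp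
  finally show ?thesis
    using mult_inverse_cancel_left_mat[of "transpose_mat T" n T "poly_mat n [:2 * c, - 1:] T" n] T orth
    by simp
qed

text \<open>With \<open>T\<^sup>2 - 2cT + 1 = 0\<close> and \<open>c\<^sup>2 < 1\<close>, the matrix \<open>J = (T - c)/s\<close> for
  \<open>s = \<surd>(1 - c\<^sup>2)\<close> squares to \<open>-1\<close>; orthogonality \<open>T\<^sup>T = T\<^sup>-\<^sup>1 = 2c - T\<close> makes it skew.\<close>
lemma orthogonal_quadratic_complex_structure:
  fixes T :: "real mat"
  assumes T: "T \<in> carrier_mat n n" and orth: "transpose_mat T * T = 1\<^sub>m n" and c: "c\<^sup>2 < 1"
    and ann: "poly_mat n [:1, - 2 * c, 1:] T = 0\<^sub>m n n"
  obtains s J where "s \<noteq> 0" and "orthogonal_complex_structure n J" and "T = c \<cdot>\<^sub>m 1\<^sub>m n + s \<cdot>\<^sub>m J"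
proof -
  define s where "s = sqrt (1 - c\<^sup>2)"
  have "s > 0" using c by (simp add: s_def)
  have s2: "s\<^sup>2 = 1 - c\<^sup>2" using c by (simp add: s_def)
  define J where "J = poly_mat n [:- c / s, 1 / s:] T"
  have J_eq: "J = (- c / s) \<cdot>\<^sub>m 1\<^sub>m n + (1 / s) \<cdot>\<^sub>m T"
    using T by (simp add: J_def poly_mat_linear)
  have J: "J \<in> carrier_mat n n" using T by (simp add: J_def)
  have T_eq: "T = c \<cdot>\<^sub>m 1\<^sub>m n + s \<cdot>\<^sub>m J"
    using T \<open>s > 0\<close> by (intro eq_matI) (auto simp: J_eq field_simps)
  have square: "[:- c / s, 1 / s:] * [:- c / s, 1 / s:] = smult (1 / s\<^sup>2) [:1, - 2 * c, 1:] + [:- 1:]"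
    using s2 \<open>s > 0\<close> by (simp add: field_simps power2_eq_square)
  have JJ: "J * J = - 1\<^sub>m n"
    unfolding J_def poly_mat_mult[OF T, symmetric] square
    using T ann by (simp only: poly_mat_add[OF T] poly_mat_smult[OF T] poly_mat_const[OF T]) auto
  have "transpose_mat T = poly_mat n [:2 * c, - 1:] T"
    by (rule orthogonal_quadratic_transpose[OF T orth ann])
  then have Tt: "transpose_mat T = (2 * c) \<cdot>\<^sub>m 1\<^sub>m n + (- 1) \<cdot>\<^sub>m T"
    using T by (simp add: poly_mat_linear)
  have "transpose_mat J = - J"
  proof (rule eq_matI)
    fix i j assume "i < dim_row (- J)" "j < dim_col (- J)"
    then have ij: "i < n" "j < n" using J by auto
    have "T $$ (j, i) = transpose_mat T $$ (i, j)" using T ij by simp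
    then have "T $$ (j, i) = 2 * c * (if i = j then 1 else 0) - T $$ (i, j)"
      using T ij by (simp add: Tt)
    then show "transpose_mat J $$ (i, j) = (- J) $$ (i, j)"
      using ij T \<open>s > 0\<close> by (cases "i = j") (simp_all add: J_eq field_simps)
  qed (use J in auto)
  then show ?thesis
    using that[of s J] \<open>s > 0\<close> J JJ T_eq by (simp add: orthogonal_complex_structure_def)
qed

section \<open>Reality in terms of a complex structure\<close>

lemma scalar_add_smult_mat_cancel:
  fixes X Y :: "'a::field mat"
  assumes X: "X \<in> carrier_mat n n" and Y: "Y \<in> carrier_mat n n" and "s \<noteq> 0"
  shows "c \<cdot>\<^sub>m 1\<^sub>m n + s \<cdot>\<^sub>m X = c \<cdot>\<^sub>m 1\<^sub>m n + s \<cdot>\<^sub>m Y \<longleftrightarrow> X = Y"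
proof
  assume eq: "c \<cdot>\<^sub>m 1\<^sub>m n + s \<cdot>\<^sub>m X = c \<cdot>\<^sub>m 1\<^sub>m n + s \<cdot>\<^sub>m Y"
  show "X = Y"
  proof (rule eq_matI)
    fix i j assume "i < dim_row Y" "j < dim_col Y"
    then show "X $$ (i, j) = Y $$ (i, j)"
      using arg_cong[OF eq, of "\<lambda>M. M $$ (i, j)"] X Y \<open>s \<noteq> 0\<close> by simp
  qed (use X Y in auto)
qed simp

lemma orthogonal_conj_transpose_iff_anticommute:
  fixes T J h :: "real mat"
  assumes J: "orthogonal_complex_structure n J" and T: "T = c \<cdot>\<^sub>m 1\<^sub>m n + s \<cdot>\<^sub>m J" and "s \<noteq> 0"
    and h: "h \<in> carrier_mat n n" and orth: "h * transpose_mat h = 1\<^sub>m n" "transpose_mat h * h = 1\<^sub>m n"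
  shows "h * T * transpose_mat h = transpose_mat T \<longleftrightarrow> h * J = - (J * h)"
proof -
  have Jc: "J \<in> carrier_mat n n" and Jt: "transpose_mat J = - J"
    using J by (auto simp: orthogonal_complex_structure_def)
  have "h * T * transpose_mat h = c \<cdot>\<^sub>m 1\<^sub>m n + s \<cdot>\<^sub>m (h * J * transpose_mat h)"
    using h Jc orth
    by (simp add: T mult_add_distrib_mat[of h n n _ n] add_mult_distrib_mat[of _ n n _ _ n]
        mult_smult_distrib[of h n n _ n] mult_smult_assoc_mat[of _ n n _ n])
  moreover have "transpose_mat T = c \<cdot>\<^sub>m 1\<^sub>m n + s \<cdot>\<^sub>m (- J)"
    using Jc Jt by (simp add: T transpose_add[of _ n n] transpose_smult_mat)
  ultimately have "h * T * transpose_mat h = transpose_mat T \<longleftrightarrow> h * J * transpose_mat h = - J"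
    using h Jc \<open>s \<noteq> 0\<close> by (simp add: scalar_add_smult_mat_cancel)
  also have "\<dots> \<longleftrightarrow> h * J = - (J * h)"
  proof
    assume conj: "h * J * transpose_mat h = - J"
    have "h * J = h * J * (transpose_mat h * h)" using h Jc orth by simp
    also have "\<dots> = (h * J * transpose_mat h) * h"
      using h Jc by (simp add: assoc_mult_mat[of _ n n _ n _ n])
    finally show "h * J = - (J * h)" using conj h Jc by simp
  next
    assume "h * J = - (J * h)"
    then show "h * J * transpose_mat h = - J"
      using h Jc orth by (simp add: assoc_mult_mat[of _ n n _ n _ n])
  qed
  finally show ?thesis .
qed

lemma real_in_SO_group_iff_anticommute:
  fixes T J :: "real mat"
  assumes T: "T \<in> SO_mats n" and J: "orthogonal_complex_structure n J"
    and T_eq: "T = c \<cdot>\<^sub>m 1\<^sub>m n + s \<cdot>\<^sub>m J" and "s \<noteq> 0"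
  shows "real_in (SO_group n) T \<longleftrightarrow> (\<exists>h \<in> SO_mats n. h * J = - (J * h))"
  unfolding real_in_SO_group_iff[OF T]
proof (intro bex_cong refl)
  fix h assume "h \<in> SO_mats n"
  then show "h * T * transpose_mat h = transpose_mat T \<longleftrightarrow> h * J = - (J * h)"
    using orthogonal_conj_transpose_iff_anticommute[OF J T_eq \<open>s \<noteq> 0\<close>] transpose_mult_self_SO
    by (auto simp: SO_mats_def)
qed

section \<open>Determinants of complex-linear matrices\<close>

lemma comm_ring_hom_cnj: "comm_ring_hom cnj"
  by unfold_locales auto

text \<open>For commuting real matrices, \<open>X\<^sup>2 + Y\<^sup>2 = (X + iY)(X - iY)\<close> has determinant \<open>|det (X + iY)|\<^sup>2\<close>.\<close>
lemma det_add_squares_nonneg_if_commute: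
  fixes X Y :: "real mat"
  assumes X: "X \<in> carrier_mat n n" and Y: "Y \<in> carrier_mat n n" and XY: "X * Y = Y * X"
  shows "det (X * X + Y * Y) \<ge> 0"
proof -
  define W :: "complex mat" where
    "W = mat n n (\<lambda>(a,b). complex_of_real (X $$ (a,b)) + \<i> * complex_of_real (Y $$ (a,b)))"
  have W: "W \<in> carrier_mat n n" "map_mat cnj W \<in> carrier_mat n n" by (simp_all add: W_def)
  have prod: "W * map_mat cnj W = map_mat complex_of_real (X * X + Y * Y)"
  proof (rule eq_matI)
    fix a b assume "a < dim_row (map_mat complex_of_real (X * X + Y * Y))"
      and "b < dim_col (map_mat complex_of_real (X * X + Y * Y))"
    then have a: "a < n" and b: "b < n" using X Y by auto
    have comm: "(\<Sum>l = 0..<n. X $$ (a,l) * Y $$ (l,b)) = (\<Sum>l = 0..<n. Y $$ (a,l) * X $$ (l,b))"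
      using arg_cong[OF XY, of "\<lambda>M. M $$ (a,b)"] X Y a b by (simp add: scalar_prod_def)
    have "(W * map_mat cnj W) $$ (a,b) = (\<Sum>l = 0..<n.
        complex_of_real (X $$ (a,l) * X $$ (l,b) + Y $$ (a,l) * Y $$ (l,b))
        + \<i> * (complex_of_real (Y $$ (a,l) * X $$ (l,b)) - complex_of_real (X $$ (a,l) * Y $$ (l,b))))"
      using a b by (simp add: W_def scalar_prod_def algebra_simps)
    also have "\<dots> = complex_of_real (\<Sum>l = 0..<n. X $$ (a,l) * X $$ (l,b) + Y $$ (a,l) * Y $$ (l,b))
        + \<i> * (complex_of_real (\<Sum>l = 0..<n. Y $$ (a,l) * X $$ (l,b))
          - complex_of_real (\<Sum>l = 0..<n. X $$ (a,l) * Y $$ (l,b)))"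
      by (simp add: sum.distrib sum_subtractf flip: sum_distrib_left)
    also have "\<dots> = complex_of_real (\<Sum>l = 0..<n. X $$ (a,l) * X $$ (l,b) + Y $$ (a,l) * Y $$ (l,b))"
      using comm by simp
    also have "\<dots> = map_mat complex_of_real (X * X + Y * Y) $$ (a,b)"
      using X Y a b by (simp add: scalar_prod_def sum.distrib)
    finally show "(W * map_mat cnj W) $$ (a,b) = map_mat complex_of_real (X * X + Y * Y) $$ (a,b)" .
  qed (use X Y in \<open>auto simp: W_def\<close>)
  have "complex_of_real (det (X * X + Y * Y)) = det (map_mat complex_of_real (X * X + Y * Y))"
    by (simp add: of_real_hom.hom_det)
  also have "\<dots> = det W * det (map_mat cnj W)"
    by (simp add: det_mult[OF W] flip: prod)
  also have "det (map_mat cnj W) = cnj (det W)"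
    by (rule comm_ring_hom.hom_det[OF comm_ring_hom_cnj])
  also have "det W * cnj (det W) = complex_of_real ((Re (det W))\<^sup>2 + (Im (det W))\<^sup>2)"
    by (rule complex_mult_cnj)
  finally have "det (X * X + Y * Y) = (Re (det W))\<^sup>2 + (Im (det W))\<^sup>2"
    using of_real_eq_iff by blast
  then show ?thesis by simp
qed

lemma (in ring) add_squares_of_complex_structure:
  assumes a: "a \<in> carrier R" and j: "j \<in> carrier R" and aj: "a \<otimes> j = j \<otimes> a"
    and jj: "j \<otimes> j = \<ominus> \<one>"
  shows "(a \<oplus> \<one>) \<otimes> (j \<otimes> a \<ominus> j) = (j \<otimes> a \<ominus> j) \<otimes> (a \<oplus> \<one>)"
    and "(a \<oplus> \<one>) \<otimes> (a \<oplus> \<one>) \<oplus> (j \<otimes> a \<ominus> j) \<otimes> (j \<otimes> a \<ominus> j) = a \<oplus> (a \<oplus> (a \<oplus> a))"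
proof -
  have aj': "a \<otimes> (j \<otimes> x) = j \<otimes> (a \<otimes> x)" if "x \<in> carrier R" for x
    using a j that by (simp flip: m_assoc add: aj)
  have jj': "j \<otimes> (j \<otimes> x) = \<ominus> x" if "x \<in> carrier R" for x
    using j that by (simp flip: m_assoc add: jj l_minus)
  show "(a \<oplus> \<one>) \<otimes> (j \<otimes> a \<ominus> j) = (j \<otimes> a \<ominus> j) \<otimes> (a \<oplus> \<one>)"
    using a j by (simp add: ring_simprules aj aj' jj jj')
  show "(a \<oplus> \<one>) \<otimes> (a \<oplus> \<one>) \<oplus> (j \<otimes> a \<ominus> j) \<otimes> (j \<otimes> a \<ominus> j) = a \<oplus> (a \<oplus> (a \<oplus> a))"
    using a j by (simp add: ring_simprules aj aj' jj jj')
qed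

lemma det_nonneg_if_commutes_complex_structure:
  fixes A J :: "real mat"
  assumes A: "A \<in> carrier_mat n n" and J: "J \<in> carrier_mat n n"
    and AJ: "A * J = J * A" and JJ: "J * J = - 1\<^sub>m n"
  shows "det A \<ge> 0"
proof -
  let ?R = "ring_mat TYPE(real) n ()"
  interpret R: ring ?R by (rule ring_mat)
  have uminus: "\<ominus>\<^bsub>?R\<^esub> M = - M" if "M \<in> carrier_mat n n" for M
    using that by (intro R.minus_equality) (auto simp: ring_mat_simps)
  let ?X = "A + 1\<^sub>m n" and ?Y = "J * A + - J"
  have "(A \<oplus>\<^bsub>?R\<^esub> \<one>\<^bsub>?R\<^esub>) \<otimes>\<^bsub>?R\<^esub> (J \<otimes>\<^bsub>?R\<^esub> A \<ominus>\<^bsub>?R\<^esub> J)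
      = (J \<otimes>\<^bsub>?R\<^esub> A \<ominus>\<^bsub>?R\<^esub> J) \<otimes>\<^bsub>?R\<^esub> (A \<oplus>\<^bsub>?R\<^esub> \<one>\<^bsub>?R\<^esub>)"
   and "(A \<oplus>\<^bsub>?R\<^esub> \<one>\<^bsub>?R\<^esub>) \<otimes>\<^bsub>?R\<^esub> (A \<oplus>\<^bsub>?R\<^esub> \<one>\<^bsub>?R\<^esub>)
      \<oplus>\<^bsub>?R\<^esub> (J \<otimes>\<^bsub>?R\<^esub> A \<ominus>\<^bsub>?R\<^esub> J) \<otimes>\<^bsub>?R\<^esub> (J \<otimes>\<^bsub>?R\<^esub> A \<ominus>\<^bsub>?R\<^esub> J)
      = A \<oplus>\<^bsub>?R\<^esub> (A \<oplus>\<^bsub>?R\<^esub> (A \<oplus>\<^bsub>?R\<^esub> A))"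
    using R.add_squares_of_complex_structure[of A J] A J AJ JJ by (simp_all add: ring_mat_simps uminus)
  then have comm: "?X * ?Y = ?Y * ?X" and squares: "?X * ?X + ?Y * ?Y = A + (A + (A + A))"
    using A J by (simp_all add: ring_mat_simps a_minus_def uminus)
  have "0 \<le> det (?X * ?X + ?Y * ?Y)"
    using A J comm by (intro det_add_squares_nonneg_if_commute) auto
  also have "?X * ?X + ?Y * ?Y = 4 \<cdot>\<^sub>m A"
    unfolding squares using A by (intro eq_matI) auto
  finally have "0 \<le> 4 ^ n * det A"
    using A by simp
  moreover have "(0::real) < 4 ^ n" by simp
  ultimately show ?thesis by (simp add: zero_le_mult_iff)
qed

section \<open>Orthonormal bases adapted to a complex structure\<close>

lemma scalar_prod_self_pos:
  fixes w :: "real vec"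
  assumes w: "w \<in> carrier_vec n" and "w \<noteq> 0\<^sub>v n"
  shows "w \<bullet> w > 0"
proof -
  have sum: "w \<bullet> w = (\<Sum>i = 0..<n. w $ i * w $ i)" using w by (simp add: scalar_prod_def)
  have "w \<bullet> w \<noteq> 0"
  proof
    assume "w \<bullet> w = 0"
    then have "\<forall>i\<in>{0..<n}. w $ i * w $ i = 0"
      unfolding sum by (subst (asm) sum_nonneg_eq_0_iff) auto
    then have "w = 0\<^sub>v n" using w by (intro eq_vecI) auto
    then show False using \<open>w \<noteq> 0\<^sub>v n\<close> by simp
  qed
  moreover have "w \<bullet> w \<ge> 0" unfolding sum by (intro sum_nonneg) auto
  ultimately show ?thesis by simp
qed

text \<open>Normalise a kernel vector of the singular matrix with rows \<open>u 0, \<dots>, u (p - 1)\<close>,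
  padded by zero rows.\<close>
lemma exists_unit_vec_orthogonal:
  fixes u :: "nat \<Rightarrow> real vec"
  assumes p: "p < n" and u: "\<And>r. r < p \<Longrightarrow> u r \<in> carrier_vec n"
  obtains v where "v \<in> carrier_vec n" "v \<bullet> v = 1" "\<And>r. r < p \<Longrightarrow> u r \<bullet> v = 0"
proof -
  define c where "c i = (if i < p then u i else 0\<^sub>v n)" for i
  define B where "B = mat\<^sub>r n n (\<lambda>i. if i = n - 1 then 0\<^sub>v n else c i)"
  have B: "B \<in> carrier_mat n n" by (simp add: B_def)
  have "det B = 0"
    unfolding B_def using p u by (intro det_row_0) (auto simp: c_def)
  then obtain w where w: "w \<in> carrier_vec n" "w \<noteq> 0\<^sub>v n" "B *\<^sub>v w = 0\<^sub>v n"
    using det_0_iff_vec_prod_zero[OF B] by auto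
  have orth: "u r \<bullet> w = 0" if "r < p" for r
  proof -
    have "r < n" "r \<noteq> n - 1" using that p by auto
    then show ?thesis
      using arg_cong[OF w(3), of "\<lambda>x. x $ r"] that u[OF that] by (simp add: B_def c_def)
  qed
  have pos: "w \<bullet> w > 0" by (rule scalar_prod_self_pos[OF w(1,2)])
  define v where "v = (1 / sqrt (w \<bullet> w)) \<cdot>\<^sub>v w"
  have "v \<bullet> v = (1 / sqrt (w \<bullet> w)) * ((1 / sqrt (w \<bullet> w)) * (w \<bullet> w))"
    using w by (simp add: v_def)
  also have "\<dots> = 1" using pos by (simp add: field_simps)
  finally show thesis
    using that[of v] w orth u by (simp add: v_def)
qed

lemma skew_mat_scalar_prod:
  fixes J :: "real mat"
  assumes J: "J \<in> carrier_mat n n" and Jt: "transpose_mat J = - J"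
    and x: "x \<in> carrier_vec n" and y: "y \<in> carrier_vec n"
  shows "x \<bullet> (J *\<^sub>v y) = - ((J *\<^sub>v x) \<bullet> y)"
  using transpose_vec_mult_scalar[OF J y x] Jt J x y by simp

definition adapted_orthonormal_system :: "nat \<Rightarrow> real mat \<Rightarrow> nat \<Rightarrow> (nat \<Rightarrow> real vec) \<Rightarrow> bool" where
  "adapted_orthonormal_system n J p u \<longleftrightarrow>
     (\<forall>r<p. u r \<in> carrier_vec n) \<and> (\<forall>i<p. \<forall>j<p. u i \<bullet> u j = (if i = j then 1 else 0)) \<and>
     (\<forall>r<p. J *\<^sub>v u r = (if even r then u (Suc r) else - u (r - 1)))"

lemma orthogonal_complex_structure_vec:
  fixes J :: "real mat"
  assumes J: "orthogonal_complex_structure n J" and x: "x \<in> carrier_vec n"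
  shows "J *\<^sub>v (J *\<^sub>v x) = - x" and "x \<bullet> (J *\<^sub>v x) = 0" and "(J *\<^sub>v x) \<bullet> (J *\<^sub>v x) = x \<bullet> x"
proof -
  have Jc: "J \<in> carrier_mat n n" and Jt: "transpose_mat J = - J" and JJ: "J * J = - 1\<^sub>m n"
    using J by (auto simp: orthogonal_complex_structure_def)
  have "J *\<^sub>v (J *\<^sub>v x) = (J * J) *\<^sub>v x" using Jc x by simp
  then show JJx: "J *\<^sub>v (J *\<^sub>v x) = - x" using JJ x by simp
  show "x \<bullet> (J *\<^sub>v x) = 0"
    using skew_mat_scalar_prod[OF Jc Jt x x] comm_scalar_prod[of x n "J *\<^sub>v x"] Jc x by simp
  show "(J *\<^sub>v x) \<bullet> (J *\<^sub>v x) = x \<bullet> x"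
    using skew_mat_scalar_prod[OF Jc Jt x, of "J *\<^sub>v x"] JJx Jc x by simp
qed

lemma adapted_orthonormal_system_orthogonal_image:
  fixes J :: "real mat"
  assumes J: "orthogonal_complex_structure n J" and u: "adapted_orthonormal_system n J (2 * k) u"
    and e: "e \<in> carrier_vec n" and ue: "\<And>r. r < 2 * k \<Longrightarrow> u r \<bullet> e = 0" and r: "r < 2 * k"
  shows "u r \<bullet> (J *\<^sub>v e) = 0"
proof -
  have Jc: "J \<in> carrier_mat n n" and Jt: "transpose_mat J = - J"
    using J by (auto simp: orthogonal_complex_structure_def)
  have uc: "u r \<in> carrier_vec n" "r - 1 < 2 * k \<Longrightarrow> u (r - 1) \<in> carrier_vec n"
    and uJ: "J *\<^sub>v u r = (if even r then u (Suc r) else - u (r - 1))"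
    using u r by (auto simp: adapted_orthonormal_system_def)
  have "(J *\<^sub>v u r) \<bullet> e = 0"
  proof (cases "even r")
    case True
    then have "Suc r < 2 * k" using r by presburger
    then show ?thesis using uJ True ue by simp
  next
    case False
    then show ?thesis using uJ ue[of "r - 1"] uc e r by simp
  qed
  then show ?thesis
    using skew_mat_scalar_prod[OF Jc Jt uc(1) e] by simp
qed

lemma adapted_orthonormal_system_extend:
  fixes J :: "real mat"
  assumes J: "orthogonal_complex_structure n J" and u: "adapted_orthonormal_system n J (2 * k) u"
    and "2 * k < n"
  obtains u' where "adapted_orthonormal_system n J (2 * Suc k) u'"
proof -
  have uc: "u r \<in> carrier_vec n" if "r < 2 * k" for r
    using u that by (simp add: adapted_orthonormal_system_def)
  have uo: "u i \<bullet> u j = (if i = j then 1 else 0)" if "i < 2 * k" "j < 2 * k" for i j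
    using u that by (simp add: adapted_orthonormal_system_def)
  have uJ: "J *\<^sub>v u r = (if even r then u (Suc r) else - u (r - 1))" if "r < 2 * k" for r
    using u that by (simp add: adapted_orthonormal_system_def)
  obtain e where e: "e \<in> carrier_vec n" "e \<bullet> e = 1" and ue: "\<And>r. r < 2 * k \<Longrightarrow> u r \<bullet> e = 0"
    using exists_unit_vec_orthogonal[of "2 * k" n u] \<open>2 * k < n\<close> uc by blast
  define f where "f = J *\<^sub>v e"
  have f: "f \<in> carrier_vec n"
    using J e by (auto simp: f_def orthogonal_complex_structure_def intro: mult_mat_vec_carrier)
  have uf: "u r \<bullet> f = 0" if "r < 2 * k" for r
    unfolding f_def by (rule adapted_orthonormal_system_orthogonal_image[OF J u e(1) ue that])
  have Jf: "J *\<^sub>v f = - e" and ef: "e \<bullet> f = 0" and ff: "f \<bullet> f = 1"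
    using orthogonal_complex_structure_vec[OF J e(1)] e by (simp_all add: f_def)
  define u' where "u' = u(2 * k := e, Suc (2 * k) := f)"
  have u'c: "u' r \<in> carrier_vec n" if "r < 2 * Suc k" for r
    using uc e f that by (auto simp: u'_def)
  have "u' i \<bullet> u' j = (if i = j then 1 else 0)" if ij: "i < 2 * Suc k" "j < 2 * Suc k" "i \<le> j" for i j
  proof -
    consider "j < 2 * k" | "j = 2 * k" | "j = Suc (2 * k)" using ij by atomize_elim auto
    then show ?thesis
    proof cases
      case 1
      then show ?thesis using ij uo[of i j] by (simp add: u'_def)
    next
      case 2
      then show ?thesis using ij ue[of i] e by (cases "i = 2 * k") (auto simp: u'_def)
    next
      case 3
      then show ?thesis
        using ij uf[of i] ff ef by (cases "i = Suc (2 * k)"; cases "i = 2 * k") (auto simp: u'_def)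
    qed
  qed
  then have u'o: "u' i \<bullet> u' j = (if i = j then 1 else 0)" if "i < 2 * Suc k" "j < 2 * Suc k" for i j
    using that comm_scalar_prod[OF u'c u'c] nat_le_linear[of i j] by metis
  have u'J: "J *\<^sub>v u' r = (if even r then u' (Suc r) else - u' (r - 1))" if r: "r < 2 * Suc k" for r
  proof -
    consider "r < 2 * k" | "r = 2 * k" | "r = Suc (2 * k)" using r by atomize_elim auto
    then show ?thesis
    proof cases
      case 1
      then have "even r \<Longrightarrow> Suc r < 2 * k" by presburger
      then show ?thesis using 1 uJ[OF 1] by (auto simp: u'_def)
    qed (simp_all add: u'_def f_def Jf[unfolded f_def])
  qed
  show thesis
    using that[of u'] u'c u'o u'J by (simp add: adapted_orthonormal_system_def)
qed

lemma adapted_orthonormal_system_exists: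
  fixes J :: "real mat"
  assumes J: "orthogonal_complex_structure n J"
  shows "2 * k \<le> n \<Longrightarrow> \<exists>u. adapted_orthonormal_system n J (2 * k) u"
proof (induct k)
  case 0
  then show ?case by (simp add: adapted_orthonormal_system_def)
next
  case (Suc k)
  then have "2 * k < n" by simp
  with Suc obtain u where "adapted_orthonormal_system n J (2 * k) u" by auto
  then show ?case
    using adapted_orthonormal_system_extend[OF J _ \<open>2 * k < n\<close>] by blast
qed

text \<open>The standard complex structure: \<open>e (2i) \<mapsto> e (2i + 1) \<mapsto> - e (2i)\<close>.\<close>
definition std_complex_structure :: "nat \<Rightarrow> real mat" where
  "std_complex_structure n = mat n n (\<lambda>(i, j).
     if even j then (if i = Suc j then 1 else 0) else (if i = j - 1 then - 1 else 0))"

lemma orthogonal_conj_std_complex_structure: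
  fixes J :: "real mat"
  assumes J: "orthogonal_complex_structure n J" and "even n"
  obtains U where "U \<in> carrier_mat n n" "transpose_mat U * U = 1\<^sub>m n"
    "transpose_mat U * (J * U) = std_complex_structure n"
proof -
  have Jc: "J \<in> carrier_mat n n" using J by (simp add: orthogonal_complex_structure_def)
  obtain u where "adapted_orthonormal_system n J n u"
    using adapted_orthonormal_system_exists[OF J, of "n div 2"] \<open>even n\<close> by auto
  then have uc: "\<And>r. r < n \<Longrightarrow> u r \<in> carrier_vec n"
    and uo: "\<And>i j. i < n \<Longrightarrow> j < n \<Longrightarrow> u i \<bullet> u j = (if i = j then 1 else 0)"
    and uJ: "\<And>r. r < n \<Longrightarrow> J *\<^sub>v u r = (if even r then u (Suc r) else - u (r - 1))"
    by (simp_all add: adapted_orthonormal_system_def)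
  define U where "U = mat n n (\<lambda>(i, j). u j $ i)"
  have U: "U \<in> carrier_mat n n" by (simp add: U_def)
  have colU: "col U j = u j" if "j < n" for j
    using uc[OF that] that by (intro eq_vecI) (auto simp: U_def)
  have "transpose_mat U * U = 1\<^sub>m n"
    using U colU uo by (intro eq_matI) auto
  moreover have "transpose_mat U * (J * U) = std_complex_structure n"
  proof (rule eq_matI)
    fix i j assume "i < dim_row (std_complex_structure n)" "j < dim_col (std_complex_structure n)"
    then have i: "i < n" and j: "j < n" by (auto simp: std_complex_structure_def)
    have "(transpose_mat U * (J * U)) $$ (i, j) = u i \<bullet> (J *\<^sub>v u j)"
      using i j U Jc colU by (simp add: mult_mat_vec_def)
    also have "\<dots> = std_complex_structure n $$ (i, j)"
    proof (cases "even j")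
      case True
      then have "Suc j < n" using j \<open>even n\<close> by presburger
      then show ?thesis using True uJ[OF j] uo[OF i] i j by (simp add: std_complex_structure_def)
    next
      case False
      have "j - 1 < n" using j by simp
      then have "u i \<bullet> (J *\<^sub>v u j) = - (u i \<bullet> u (j - 1))"
        using False uJ[OF j] uc[OF i] uc[of "j - 1"] by simp
      then show ?thesis
        using False uo[OF i \<open>j - 1 < n\<close>] i j by (simp add: std_complex_structure_def)
    qed
    finally show "(transpose_mat U * (J * U)) $$ (i, j) = std_complex_structure n $$ (i, j)" .
  qed (use U Jc in \<open>auto simp: std_complex_structure_def\<close>)
  ultimately show thesis using that U by blast
qed

section \<open>Orthogonal matrices anticommuting with a complex structure\<close>

lemma alternating_signs_anticommute_std_complex_structure:
  "mat_diag n (\<lambda>i. (- 1) ^ i) * std_complex_structure n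
     = - (std_complex_structure n * mat_diag n (\<lambda>i. (- 1) ^ i))"
proof -
  have "(- 1 :: real) ^ i * std_complex_structure n $$ (i, j) = - (std_complex_structure n $$ (i, j) * (- 1) ^ j)"
    if "i < n" "j < n" for i j
  proof (cases "even j")
    case False
    then have "j = Suc (j - 1)" by presburger
    then have "(- 1 :: real) ^ j = - ((- 1) ^ (j - 1))" by (metis power_Suc mult_minus1)
    then show ?thesis using False that by (simp add: std_complex_structure_def)
  qed (use that in \<open>simp add: std_complex_structure_def\<close>)
  moreover have "std_complex_structure n \<in> carrier_mat n n"
    by (simp add: std_complex_structure_def)
  ultimately show ?thesis
    by (intro eq_matI) (auto simp: mat_diag_mult_left mat_diag_mult_right)
qed

lemma transpose_alternating_signs:
  "transpose_mat (mat_diag n (\<lambda>i. (- 1 :: real) ^ i)) = mat_diag n (\<lambda>i. (- 1) ^ i)"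
  by (intro eq_matI) (auto simp: mat_diag_def)

lemma alternating_signs_squared:
  "mat_diag n (\<lambda>i. (- 1 :: real) ^ i) * mat_diag n (\<lambda>i. (- 1) ^ i) = 1\<^sub>m n"
proof -
  have "(- 1 :: real) ^ i * (- 1) ^ i = 1" for i
    by (metis power_mult_distrib mult_minus1 minus_minus power_one)
  then show ?thesis by simp
qed

lemma prod_alternating_signs: "(\<Prod>i = 0..<2 * m. (- 1 :: real) ^ i) = (- 1) ^ m"
  by (induct m) (simp_all add: prod.atLeast0_lessThan_Suc power_add)

lemma det_alternating_signs:
  assumes "even n"
  shows "det (mat_diag n (\<lambda>i. (- 1 :: real) ^ i)) = (- 1) ^ (n div 2)"
proof -
  have "det (mat_diag n (\<lambda>i. (- 1 :: real) ^ i)) = (\<Prod>i = 0..<n. (- 1) ^ i)"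
    by (subst det_upper_triangular[of _ n])
      (auto simp: upper_triangular_def mat_diag_def prod_list_diag_prod)
  also have "\<dots> = (- 1) ^ (n div 2)"
    using assms prod_alternating_signs[of "n div 2"] by simp
  finally show ?thesis .
qed

text \<open>Conjugate the alternating sign matrix, which anticommutes with the standard complex
  structure, into a basis adapted to \<open>J\<close>.\<close>
lemma exists_orthogonal_anticommuting:
  fixes J :: "real mat"
  assumes J: "orthogonal_complex_structure n J" and "even n"
  obtains g where "g \<in> carrier_mat n n" "g * transpose_mat g = 1\<^sub>m n" "g * J = - (J * g)"
    "det g = (- 1) ^ (n div 2)"
proof -
  have Jc: "J \<in> carrier_mat n n" using J by (simp add: orthogonal_complex_structure_def)
  obtain U where U: "U \<in> carrier_mat n n" and UtU: "transpose_mat U * U = 1\<^sub>m n"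
    and K: "transpose_mat U * (J * U) = std_complex_structure n"
    using orthogonal_conj_std_complex_structure[OF J \<open>even n\<close>] by blast
  let ?Ut = "transpose_mat U" and ?K = "std_complex_structure n" and ?D = "mat_diag n (\<lambda>i. (- 1 :: real) ^ i)"
  have Ut: "?Ut \<in> carrier_mat n n" using U by simp
  have UUt: "U * ?Ut = 1\<^sub>m n" using mat_mult_left_right_inverse[OF Ut U UtU] .
  have Kc: "?K \<in> carrier_mat n n" by (simp add: std_complex_structure_def)
  note cancel = mult_inverse_cancel_left_mat[OF Ut U _ UtU, of _ n]
  have "U * (?K * ?Ut) = (U * ?Ut) * J * (U * ?Ut)"
    unfolding K[symmetric] using U Jc by (simp add: assoc_mult_mat[of _ n n _ n _ n])
  then have J_eq: "J = U * (?K * ?Ut)"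
    using UUt Jc by simp
  define g where "g = U * (?D * ?Ut)"
  have gc: "g \<in> carrier_mat n n"
    unfolding g_def by (rule mult_carrier_mat[OF U mult_carrier_mat[OF mat_diag_dim Ut]])
  note simps = assoc_mult_mat[of _ n n _ n _ n] mult_carrier_mat[of _ n n _ n] cancel U Ut Kc
  have "g * J = U * ((?D * ?K) * ?Ut)"
    by (simp add: g_def J_eq simps)
  also have "\<dots> = U * (- (?K * ?D) * ?Ut)"
    by (simp only: alternating_signs_anticommute_std_complex_structure)
  also have "\<dots> = - (U * ((?K * ?D) * ?Ut))"
    using U Kc
    by (subst uminus_mult_left_mat, simp add: mat_diag_def, subst uminus_mult_right_mat, simp_all)
  also have "U * ((?K * ?D) * ?Ut) = J * g"
    by (simp add: g_def J_eq simps)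
  finally have gJ: "g * J = - (J * g)" .
  have "g * transpose_mat g = 1\<^sub>m n"
    by (simp add: g_def transpose_mult[of _ n n _ n] simps transpose_alternating_signs UUt
        mult_inverse_cancel_left_mat[OF mat_diag_dim mat_diag_dim _ alternating_signs_squared[of n], of _ n])
  moreover have "det g = (- 1) ^ (n div 2)"
    using det_alternating_signs[OF \<open>even n\<close>] det_mult[OF U Ut] UUt
    by (simp add: g_def det_mult[OF U mult_carrier_mat[OF mat_diag_dim Ut]] det_mult[OF mat_diag_dim Ut])
  ultimately show thesis using that gc gJ by blast
qed

lemma ex_SO_anticommuting_iff:
  fixes J :: "real mat"
  assumes J: "orthogonal_complex_structure n J" and "even n"
  shows "(\<exists>h \<in> SO_mats n. h * J = - (J * h)) \<longleftrightarrow> n mod 4 \<noteq> 2"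
proof -
  have Jc: "J \<in> carrier_mat n n" and Jt: "transpose_mat J = - J" and JJ: "J * J = - 1\<^sub>m n"
    using J by (auto simp: orthogonal_complex_structure_def)
  obtain g where g: "g \<in> carrier_mat n n" "g * transpose_mat g = 1\<^sub>m n"
    and gJ: "g * J = - (J * g)" and det_g: "det g = (- 1) ^ (n div 2)"
    using exists_orthogonal_anticommuting[OF J \<open>even n\<close>] by blast
  have mod4: "n mod 4 \<noteq> 2 \<longleftrightarrow> even (n div 2)" using \<open>even n\<close> by presburger
  show ?thesis
  proof
    assume "\<exists>h \<in> SO_mats n. h * J = - (J * h)"
    then obtain h where h: "h \<in> carrier_mat n n" "det h = 1" and hJ: "h * J = - (J * h)"
      by (auto simp: SO_mats_def)
    have "transpose_mat J * transpose_mat g = - (transpose_mat g * transpose_mat J)"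
      using arg_cong[OF gJ, of transpose_mat] g Jc
      by (simp add: transpose_mult[of _ n n _ n] transpose_uminus)
    then have gtJ: "transpose_mat g * J = - (J * transpose_mat g)"
      using Jt Jc g by simp
    have "transpose_mat g * h * J = - (transpose_mat g * J * h)"
      using g h Jc by (simp add: hJ)
    also have "\<dots> = J * (transpose_mat g * h)"
      unfolding gtJ using g h Jc by simp
    finally have "transpose_mat g * h * J = J * (transpose_mat g * h)" .
    then have "det (transpose_mat g * h) \<ge> 0"
      using g h Jc JJ by (intro det_nonneg_if_commutes_complex_structure) auto
    then have "(- 1 :: real) ^ (n div 2) \<ge> 0"
      using g h det_g by (simp add: det_mult[of _ n] det_transpose)
    then show "n mod 4 \<noteq> 2"
      unfolding mod4 by (cases "even (n div 2)") simp_all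
  next
    assume "n mod 4 \<noteq> 2"
    then have "g \<in> SO_mats n"
      using g det_g mod4 by (simp add: SO_mats_def)
    then show "\<exists>h \<in> SO_mats n. h * J = - (J * h)" using gJ by blast
  qed
qed

theorem lemma3p3:
  fixes n :: nat and T :: "real mat"
  assumes "even n"
    and "T \<in> SO_mats n"
    and "\<exists>q :: real poly. \<exists>k :: nat. irreducible q \<and> degree q = 2 \<and> is_min_poly n T (q ^ k)"
  shows "real_in (SO_group n) T \<longleftrightarrow> n mod 4 \<noteq> 2"
proof -
  obtain q :: "real poly" and k where irr: "irreducible q" and deg: "degree q = 2"
    and min: "is_min_poly n T (q ^ k)"
    using assms(3) by blast
  have T: "T \<in> carrier_mat n n" and orth: "transpose_mat T * T = 1\<^sub>m n" "T * transpose_mat T = 1\<^sub>m n"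
    using assms(2) transpose_mult_self_SO[OF assms(2)] by (auto simp: SO_mats_def)
  have "poly_mat n q T = 0\<^sub>m n n"
    using normal_mat_poly_mat_power_eq_0[OF T, where k = k] orth min by (simp add: is_min_poly_def)
  then obtain c where "c\<^sup>2 < 1" "poly_mat n [:1, - 2 * c, 1:] T = 0\<^sub>m n n"
    using orthogonal_irreducible_quadratic_annihilator[OF T orth(1) irr deg] by blast
  then obtain s J where "s \<noteq> 0" and J: "orthogonal_complex_structure n J"
    and T_eq: "T = c \<cdot>\<^sub>m 1\<^sub>m n + s \<cdot>\<^sub>m J"
    using orthogonal_quadratic_complex_structure[OF T orth(1)] by blast
  have "real_in (SO_group n) T \<longleftrightarrow> (\<exists>h \<in> SO_mats n. h * J = - (J * h))"
    using real_in_SO_group_iff_anticommute[OF assms(2) J T_eq \<open>s \<noteq> 0\<close>] .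
  also have "\<dots> \<longleftrightarrow> n mod 4 \<noteq> 2"
    using ex_SO_anticommuting_iff[OF J \<open>even n\<close>] .
  finally show ?thesis .
qed

end
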